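(* Let $\mathbb X$ be a multi-sorted topological structure in the signature of $\underset{\sim}{\mathbf M}_n$ with sorts $X_0,\dots,X_n$ satisfying (A4) for all $1\le j<k\le n$ and all $x,y\in X_j$, $u,v\in X_k$: if $x\leqslant^j y$, $y\leqslant^{jk}u$, $u\leqslant^k v$ then $x\leqslant^{jk}v$; and (A5) for all $1\le j<k<\ell\le n$ and $x\in X_j,y\in X_k,z\in X_\ell$: if $x\leqslant^{jk}y$ and $y\leqslant^{k\ell}z$ then $x\leqslant^{j\ell}z$. Then the conjunction of (A6) $\langle X_k;\leqslant^k,\mathscr T_k\rangle$ is a Priestley space for all $k\in[0,n]$, and (A7) for all $1\le j<k\le n$ and all $x\in X_j$, $y\in X_k$ with $x\not\leqslant^{jk}y$ there exist mutually increasing sets $U_j,\dots,U_k$, with $U_\ell$ a clopen up-set of $\langle X_\ell;\leqslant^\ell,\mathscr T_\ell\rangle$ for each $\ell\in[j,k]$, such that $x\in U_j$ and $y\in X_k\setminus U_k$, is equivalent to the conjunction of the following four conditions: (A6$^0$) $\langle X_0;\leqslant^0,\mathscr T_0\rangle$ is a Priestley space; (A6$'$) $\leqslant^k$ is a partial order on $X_k$ for all $k\in[1,n]$; (A6$''$) $\langle X_k;\mathscr T_k\rangle$ is compact for all $k\in[1,n]$; (A7$'$) for all $j,k\in[1,n]$ with $j\le k$ and all $x\in X_j$, $y\in X_k$ with $x\not\leqslant^{jk}y$ there exist mutually increasing sets $U_j,\dots,U_k$, with $U_\ell$ a clopen up-set of $\langle X_\ell;\leqslant^\ell,\mathscr T_\ell\rangle$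 for each $\ell\in[j,k]$, such that $x\in U_j$ and $y\in X_k\setminus U_k$.
   Context: Fix an integer $n\ge 1$ and write $[m,p]=\{i\in\mathbb Z:m\le i\le p\}$. A multi-sorted topological structure in the signature of $\underset{\sim}{\mathbf M}_n$ consists of pairwise disjoint topological spaces $X_0,\dots,X_n$ (with $\mathscr T_k$ the topology of $X_k$, and $X=X_0\cup\dots\cup X_n$ carrying the disjoint-union topology), maps $g_k\colon X_k\to X_0$ ($k\in[1,n]$), and binary relations $\leqslant^k\subseteq X_k\times X_k$ ($k\in[0,n]$) and $\leqslant^{jk}\subseteq X_j\times X_k$ ($1\le j<k\le n$). Write ${\leqslant^{kk}}:={\leqslant^k}$ for $k\in[1,n]$. A subset $U\subseteq X_\ell$ is an up-set of $\langle X_\ell;\leqslant^\ell\rangle$ if $x\in U$ and $x\leqslant^\ell y$ imply $y\in U$. For $j\le k$ in $[1,n]$ and $U_\ell\subseteq X_\ell$ ($\ell\in[j,k]$), the sets $U_j,\dots,U_k$ are mutually increasing if for all $i\le\ell$ in $[j,k]$, whenever $x\in U_i$, $y\in X_\ell$ and $x\leqslant^{i\ell}y$, then $y\in U_\ell$. A Priestley space is an ordered topological space that is compact and totally order-disconnected (for $x\not\le y$ there is a clopen up-set containing $x$ but not $y$). *)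

theory Defs
  imports "HOL-Analysis.Analysis"
begin

(* A multi-sorted topological structure in the signature of M_n:
   sorts X_k = topspace (T k), k in [0,n]; maps g k : X_k -> X_0 (k in [1,n]);
   relations R k k = \<leqslant>^k on X_k, R j k = \<leqslant>^{jk} on X_j x X_k for 1 <= j < k <= n. *)
definition mstruct :: "nat \<Rightarrow> (nat \<Rightarrow> 'a topology) \<Rightarrow> (nat \<Rightarrow> 'a \<Rightarrow> 'a)
    \<Rightarrow> (nat \<Rightarrow> nat \<Rightarrow> 'a \<Rightarrow> 'a \<Rightarrow> bool) \<Rightarrow> bool" where
  "mstruct n T g R \<longleftrightarrow>
     (\<forall>j\<le>n. \<forall>k\<le>n. j \<noteq> k \<longrightarrow> topspace (T j) \<inter> topspace (T k) = {}) \<and>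
     (\<forall>k\<in>{1..n}. \<forall>x\<in>topspace (T k). g k x \<in> topspace (T 0)) \<and>
     (\<forall>k\<le>n. \<forall>x y. R k k x y \<longrightarrow> x \<in> topspace (T k) \<and> y \<in> topspace (T k)) \<and>
     (\<forall>j k. 1 \<le> j \<and> j < k \<and> k \<le> n \<longrightarrow>
        (\<forall>x y. R j k x y \<longrightarrow> x \<in> topspace (T j) \<and> y \<in> topspace (T k)))"

definition partial_order_on_set :: "'a set \<Rightarrow> ('a \<Rightarrow> 'a \<Rightarrow> bool) \<Rightarrow> bool" where
  "partial_order_on_set X le \<longleftrightarrow>
     (\<forall>x\<in>X. le x x) \<and>
     (\<forall>x\<in>X. \<forall>y\<in>X. le x y \<and> le y x \<longrightarrow> x = y) \<and>
     (\<forall>x\<in>X. \<forall>y\<in>X. \<forall>z\<in>X. le x y \<and> le y z \<longrightarrow> le x z)"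

definition up_set :: "'a set \<Rightarrow> ('a \<Rightarrow> 'a \<Rightarrow> bool) \<Rightarrow> 'a set \<Rightarrow> bool" where
  "up_set X le U \<longleftrightarrow> U \<subseteq> X \<and> (\<forall>x\<in>U. \<forall>y\<in>X. le x y \<longrightarrow> y \<in> U)"

definition clopen_up_set :: "'a topology \<Rightarrow> ('a \<Rightarrow> 'a \<Rightarrow> bool) \<Rightarrow> 'a set \<Rightarrow> bool" where
  "clopen_up_set T le U \<longleftrightarrow> openin T U \<and> closedin T U \<and> up_set (topspace T) le U"

definition priestley :: "'a topology \<Rightarrow> ('a \<Rightarrow> 'a \<Rightarrow> bool) \<Rightarrow> bool" where
  "priestley T le \<longleftrightarrow>
     partial_order_on_set (topspace T) le \<and> compact_space T \<and>
     (\<forall>x\<in>topspace T. \<forall>y\<in>topspace T. \<not> le x y \<longrightarrow>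
        (\<exists>U. clopen_up_set T le U \<and> x \<in> U \<and> y \<notin> U))"

definition mutually_increasing ::
    "(nat \<Rightarrow> 'a topology) \<Rightarrow> (nat \<Rightarrow> nat \<Rightarrow> 'a \<Rightarrow> 'a \<Rightarrow> bool) \<Rightarrow> nat \<Rightarrow> nat \<Rightarrow> (nat \<Rightarrow> 'a set) \<Rightarrow> bool" where
  "mutually_increasing T R j k U \<longleftrightarrow>
     (\<forall>l\<in>{j..k}. U l \<subseteq> topspace (T l)) \<and>
     (\<forall>i\<in>{j..k}. \<forall>l\<in>{j..k}. i \<le> l \<longrightarrow>
        (\<forall>x\<in>U i. \<forall>y\<in>topspace (T l). R i l x y \<longrightarrow> y \<in> U l))"

definition sep_cond :: "(nat \<Rightarrow> 'a topology) \<Rightarrow> (nat \<Rightarrow> nat \<Rightarrow> 'a \<Rightarrow> 'a \<Rightarrow> bool) \<Rightarrow> nat \<Rightarrow> nat \<Rightarrow> bool" where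
  "sep_cond T R j k \<longleftrightarrow>
     (\<forall>x\<in>topspace (T j). \<forall>y\<in>topspace (T k). \<not> R j k x y \<longrightarrow>
        (\<exists>U. mutually_increasing T R j k U \<and>
             (\<forall>l\<in>{j..k}. clopen_up_set (T l) (R l l) (U l)) \<and>
             x \<in> U j \<and> y \<in> topspace (T k) - U k))"

end

theory Submission
  imports Defs
begin

text \<open>For \<open>j = k\<close> a family of mutually increasing sets is a single up-set of \<open>X\<^sub>k\<close>, so condition
  (A7\<open>'\<close>) on the diagonal says precisely that \<open>X\<^sub>k\<close> is totally order-disconnected. The equivalence
  therefore only moves this axiom of the sorts \<open>k \<ge> 1\<close> between (A6) and (A7\<open>'\<close>).\<close>

definition totally_order_disconnected :: "'a topology \<Rightarrow> ('a \<Rightarrow> 'a \<Rightarrow> bool) \<Rightarrow> bool" where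
  "totally_order_disconnected T le \<longleftrightarrow>
     (\<forall>x\<in>topspace T. \<forall>y\<in>topspace T. \<not> le x y \<longrightarrow>
        (\<exists>U. clopen_up_set T le U \<and> x \<in> U \<and> y \<notin> U))"

lemma priestley_iff:
  "priestley T le \<longleftrightarrow>
     partial_order_on_set (topspace T) le \<and> compact_space T \<and> totally_order_disconnected T le"
  unfolding priestley_def totally_order_disconnected_def ..

lemma mutually_increasing_self_iff:
  "mutually_increasing T R k k U \<longleftrightarrow> up_set (topspace (T k)) (R k k) (U k)"
  unfolding mutually_increasing_def up_set_def by auto

lemma sep_cond_self_iff:
  "sep_cond T R k k \<longleftrightarrow> totally_order_disconnected (T k) (R k k)"
  unfolding totally_order_disconnected_def
proof (intro iffI ballI impI)
  fix x y
  assume "sep_cond T R k k"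
    and "x \<in> topspace (T k)" "y \<in> topspace (T k)" "\<not> R k k x y"
  then obtain U where "clopen_up_set (T k) (R k k) (U k)" "x \<in> U k" "y \<notin> U k"
    unfolding sep_cond_def by fastforce
  then show "\<exists>U. clopen_up_set (T k) (R k k) U \<and> x \<in> U \<and> y \<notin> U"
    by blast
next
  assume sep: "\<forall>x\<in>topspace (T k). \<forall>y\<in>topspace (T k). \<not> R k k x y \<longrightarrow>
      (\<exists>U. clopen_up_set (T k) (R k k) U \<and> x \<in> U \<and> y \<notin> U)"
  show "sep_cond T R k k"
    unfolding sep_cond_def
  proof (intro ballI impI)
    fix x y
    assume "x \<in> topspace (T k)" "y \<in> topspace (T k)" "\<not> R k k x y"
    then obtain U where U: "clopen_up_set (T k) (R k k) U" "x \<in> U" "y \<notin> U"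
      using sep by blast
    then have "mutually_increasing T R k k (\<lambda>_. U)"
      unfolding mutually_increasing_self_iff clopen_up_set_def by simp
    with U \<open>y \<in> topspace (T k)\<close> show "\<exists>U. mutually_increasing T R k k U \<and>
        (\<forall>l\<in>{k..k}. clopen_up_set (T l) (R l l) (U l)) \<and> x \<in> U k \<and> y \<in> topspace (T k) - U k"
      by (intro exI[of _ "\<lambda>_. U"]) auto
  qed
qed

lemma priestley_iff_sep_cond_self:
  "priestley (T k) (R k k) \<longleftrightarrow>
     partial_order_on_set (topspace (T k)) (R k k) \<and> compact_space (T k) \<and> sep_cond T R k k"
  unfolding priestley_iff sep_cond_self_iff ..

theorem lemma4p3:
  fixes n :: nat and T :: "nat \<Rightarrow> 'a topology" and g :: "nat \<Rightarrow> 'a \<Rightarrow> 'a"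
    and R :: "nat \<Rightarrow> nat \<Rightarrow> 'a \<Rightarrow> 'a \<Rightarrow> bool"
  assumes "n \<ge> 1"
    and "mstruct n T g R"
    and A4: "\<And>j k x y u v. 1 \<le> j \<Longrightarrow> j < k \<Longrightarrow> k \<le> n \<Longrightarrow>
        x \<in> topspace (T j) \<Longrightarrow> y \<in> topspace (T j) \<Longrightarrow> u \<in> topspace (T k) \<Longrightarrow> v \<in> topspace (T k) \<Longrightarrow>
        R j j x y \<Longrightarrow> R j k y u \<Longrightarrow> R k k u v \<Longrightarrow> R j k x v"
    and A5: "\<And>j k l x y z. 1 \<le> j \<Longrightarrow> j < k \<Longrightarrow> k < l \<Longrightarrow> l \<le> n \<Longrightarrow>
        x \<in> topspace (T j) \<Longrightarrow> y \<in> topspace (T k) \<Longrightarrow> z \<in> topspace (T l) \<Longrightarrow>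
        R j k x y \<Longrightarrow> R k l y z \<Longrightarrow> R j l x z"
  shows "((\<forall>k\<le>n. priestley (T k) (R k k)) \<and>
          (\<forall>j k. 1 \<le> j \<and> j < k \<and> k \<le> n \<longrightarrow> sep_cond T R j k))
     \<longleftrightarrow>
         (priestley (T 0) (R 0 0) \<and>
          (\<forall>k\<in>{1..n}. partial_order_on_set (topspace (T k)) (R k k)) \<and>
          (\<forall>k\<in>{1..n}. compact_space (T k)) \<and>
          (\<forall>j k. 1 \<le> j \<and> j \<le> k \<and> k \<le> n \<longrightarrow> sep_cond T R j k))"
proof -
  have sorts: "(\<forall>k\<le>n. P k) \<longleftrightarrow> P 0 \<and> (\<forall>k\<in>{1..n}. P k)" for P :: "nat \<Rightarrow> bool"
    by (metis atLeastAtMost_iff le0 less_one not_le)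
  have pairs: "(\<forall>j k. 1 \<le> j \<and> j \<le> k \<and> k \<le> n \<longrightarrow> Q j k) \<longleftrightarrow>
      (\<forall>k\<in>{1..n}. Q k k) \<and> (\<forall>j k. 1 \<le> j \<and> j < k \<and> k \<le> n \<longrightarrow> Q j k)" for Q :: "nat \<Rightarrow> nat \<Rightarrow> bool"
    by (auto simp: le_less)
  have "(\<forall>k\<in>{1..n}. priestley (T k) (R k k)) \<longleftrightarrow>
      (\<forall>k\<in>{1..n}. partial_order_on_set (topspace (T k)) (R k k)) \<and>
      (\<forall>k\<in>{1..n}. compact_space (T k)) \<and> (\<forall>k\<in>{1..n}. sep_cond T R k k)"
    by (simp only: priestley_iff_sep_cond_self ball_conj_distrib)
  then show ?thesis
    unfolding sorts[of "\<lambda>k. priestley (T k) (R k k)"] pairs[of "sep_cond T R"] by blast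
qed

end
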